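(* Let $q$ be a power of the prime $p$ and let $n$ be a positive integer not divisible by $p$. Let $h\in\mathbb{F}_q[x]$ with $\gcd\left(h(x),\frac{x^n-1}{x-1}\right)=1$, and let $b(x)=\sum_{i=0}^m b_i x^i\in\mathbb{F}_q[x]$ be a permutation polynomial of $\mathbb{F}_q$. Then for every $\theta_0,\ldots,\theta_{q-1}\in\mathbb{F}_{q^n}$, the polynomial $$P(x)=L_h(x)-\frac{h(1)}{n}\cdot\mathrm{Tr}_{q^n/q}(x)+\sum_{i=0}^m\frac{b_i}{n}\cdot\mathrm{Tr}_{q^n/q}(x)^i+\sum_{i=0}^{q-1}(\theta_i^q-\theta_i)\cdot\mathrm{Tr}_{q^n/q}(x)^i$$ is a permutation polynomial of $\mathbb{F}_{q^n}$. In addition, if $\gcd\left(h(x)+1,\frac{x^n-1}{x-1}\right)=1$ and $b$ is a complete permutation polynomial of $\mathbb{F}_q$, then $P$ is a complete permutation polynomial of $\mathbb{F}_{q^n}$.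
   Context: For $u(x)=\sum_{i=0}^m a_i x^i\in\mathbb{F}_q[x]$, its linearized $q$-associate is $L_u(x)=\sum_{i=0}^m a_i x^{q^i}$. $\mathrm{Tr}_{q^n/q}(x)=x+x^q+\cdots+x^{q^{n-1}}$. A permutation polynomial of a finite field $K$ is a polynomial inducing a bijection of $K$; it is a complete permutation polynomial if moreover $b(x)+x$ induces a bijection of $K$. *)

theory Defs
  imports "HOL-Computational_Algebra.Polynomial_Factorial"
begin

text \<open>The finite field F_q viewed inside F_{q^n} (the type 'a): the fixed points of x \<mapsto> x^q.\<close>
definition subfield_q :: "nat \<Rightarrow> 'a::field set" where
  "subfield_q q = {x. x ^ q = x}"

definition poly_over :: "nat \<Rightarrow> 'a::field poly \<Rightarrow> bool" where
  "poly_over q u \<longleftrightarrow> (\<forall>i. coeff u i \<in> subfield_q q)"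

definition lin_assoc :: "nat \<Rightarrow> 'a::field poly \<Rightarrow> 'a \<Rightarrow> 'a" where
  "lin_assoc q u x = (\<Sum>i\<le>degree u. coeff u i * x ^ (q ^ i))"

definition trace_qn :: "nat \<Rightarrow> nat \<Rightarrow> 'a::field \<Rightarrow> 'a" where
  "trace_qn q n x = (\<Sum>j<n. x ^ (q ^ j))"

end

(*
  Write P(x) = L_h(x) + G(Tr x), where G depends on the trace only. The trace is itself the
  linearized associate of (x^n - 1)/(x - 1), and linearized associates of polynomials over F_q
  compose as the polynomials multiply; since polynomials commute, Tr (L_h x) = L_h (Tr x) =
  h(1) Tr x. Moreover Tr kills the terms theta^q - theta, so Tr (P x) = b (Tr x). Hence
  P x = P y forces Tr x = Tr y, as b permutes F_q, and then x - y is a common root of L_h and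
  L_((x^n - 1)/(x - 1)), which a Bezout identity for these coprime polynomials turns into
  x - y = 0. For P(x) + x, run the same argument with h + 1 and b(x) + x.
*)
theory Submission
  imports Defs "HOL-Number_Theory.Residues"
begin

(* Residues loads HOL-Algebra, whose UnivPoly and Module theories reuse these three names. *)
hide_const (open) up_ring.monom up_ring.coeff module.smult

lemma power_card_UNIV_eq_self:
  fixes x :: "'a::{field,finite}"
  shows "x ^ card (UNIV :: 'a set) = x"
proof (cases "x = 0")
  case True
  then show ?thesis by (simp add: finite_UNIV_card_ge_0)
next
  case False
  define G :: "'a monoid" where "G = \<lparr>carrier = UNIV - {0}, mult = (*), one = 1\<rparr>"
  have "comm_group G"
  proof (rule comm_groupI)
    fix y assume "y \<in> carrier G"
    then show "\<exists>z \<in> carrier G. z \<otimes>\<^bsub>G\<^esub> y = \<one>\<^bsub>G\<^esub>"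
      by (intro bexI[of _ "inverse y"]) (auto simp: G_def)
  qed (auto simp: G_def)
  moreover have "finite (carrier G)" by simp
  moreover have "x \<in> carrier G" using False by (simp add: G_def)
  ultimately have "x [^]\<^bsub>G\<^esub> card (carrier G) = \<one>\<^bsub>G\<^esub>"
    by (rule comm_group.power_order_eq_one)
  moreover have "y [^]\<^bsub>G\<^esub> m = y ^ m" for y :: 'a and m
    by (induction m) (simp_all add: G_def)
  ultimately have "x ^ (card (UNIV :: 'a set) - 1) = 1"
    by (simp add: G_def card_Diff_singleton)
  moreover have "Suc (card (UNIV :: 'a set) - 1) = card (UNIV :: 'a set)"
    using finite_UNIV_card_ge_0[where 'a = 'a] by simp
  ultimately show ?thesis
    by (metis power_Suc mult_1_right)
qed

lemma CHAR_eq_prime_if_card_eq_power: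
  assumes "prime p" and "card (UNIV :: 'a::{field,finite} set) = p ^ m"
  shows "CHAR('a) = p"
proof -
  have "prime CHAR('a)"
    by (rule prime_CHAR_semidom) (simp add: finite_imp_CHAR_pos)
  moreover have "CHAR('a) dvd p ^ m"
    using CHAR_dvd_CARD[where 'a = 'a] assms(2) by simp
  ultimately show ?thesis
    using assms(1) by (meson prime_dvd_power primes_dvd_imp_eq)
qed

lemma lin_assoc_eq_sum:
  assumes "degree u < N"
  shows "lin_assoc q u x = (\<Sum>i<N. coeff u i * x ^ (q ^ i))"
proof -
  have "lin_assoc q u x = (\<Sum>i<Suc (degree u). coeff u i * x ^ (q ^ i))"
    by (simp add: lin_assoc_def lessThan_Suc_atMost)
  also have "\<dots> = (\<Sum>i<N. coeff u i * x ^ (q ^ i))"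
    by (rule sum.mono_neutral_left) (use assms in \<open>auto simp: coeff_eq_0\<close>)
  finally show ?thesis .
qed

lemma lin_assoc_0 [simp]: "lin_assoc q 0 x = 0"
  by (simp add: lin_assoc_def)

lemma lin_assoc_1 [simp]: "lin_assoc q 1 x = x"
  by (simp add: lin_assoc_def)

lemma lin_assoc_pCons: "lin_assoc q (pCons c u) x = c * x + lin_assoc q u (x ^ q)"
proof -
  have "lin_assoc q (pCons c u) x
      = (\<Sum>i<Suc (Suc (degree u)). coeff (pCons c u) i * x ^ (q ^ i))"
    by (rule lin_assoc_eq_sum) (metis degree_pCons_le le_imp_less_Suc)
  also have "\<dots> = c * x + (\<Sum>i<Suc (degree u). coeff u i * (x ^ q) ^ (q ^ i))"
    by (subst sum.lessThan_Suc_shift) (simp add: power_mult)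
  also have "(\<Sum>i<Suc (degree u). coeff u i * (x ^ q) ^ (q ^ i)) = lin_assoc q u (x ^ q)"
    by (rule lin_assoc_eq_sum[symmetric]) simp
  finally show ?thesis .
qed

lemma lin_assoc_add: "lin_assoc q (u + v) x = lin_assoc q u x + lin_assoc q v x"
proof -
  define N where "N = Suc (max (degree u) (degree v))"
  have "degree (u + v) < N" "degree u < N" "degree v < N"
    using degree_add_le_max[of u v] by (auto simp: N_def)
  then show ?thesis
    by (simp add: lin_assoc_eq_sum[where N = N] distrib_right sum.distrib)
qed

lemma lin_assoc_smult: "lin_assoc q (smult c u) x = c * lin_assoc q u x"
  by (simp add: lin_assoc_def sum_distrib_left mult.assoc)

lemma lin_assoc_subfield_q:
  assumes "t \<in> subfield_q q"
  shows "lin_assoc q u t = poly u 1 * t"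
proof -
  have "t ^ (q ^ i) = t" for i
    using assms by (induction i) (simp_all add: subfield_q_def power_mult)
  then show ?thesis
    by (simp add: lin_assoc_def poly_altdef sum_distrib_right)
qed

lemma mult_in_subfield_q: "a \<in> subfield_q q \<Longrightarrow> b \<in> subfield_q q \<Longrightarrow> a * b \<in> subfield_q q"
  by (simp add: subfield_q_def power_mult_distrib)

lemma divide_in_subfield_q: "a \<in> subfield_q q \<Longrightarrow> b \<in> subfield_q q \<Longrightarrow> a / b \<in> subfield_q q"
  by (simp add: subfield_q_def power_divide)

definition geometric_poly :: "nat \<Rightarrow> 'a::field poly" where
  "geometric_poly n = (\<Sum>j<n. monom 1 j)"

lemma coeff_geometric_poly: "coeff (geometric_poly n) i = (if i < n then 1 else 0)"
  by (simp add: geometric_poly_def coeff_sum)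

lemma geometric_poly_eq_div: "geometric_poly n = (monom 1 n - 1) div [:-1, 1:]"
proof -
  have "[:-1, 1:] = [:0, 1:] - (1 :: 'a poly)"
    by (simp add: one_pCons)
  then have "monom 1 n - 1 = [:-1, 1:] * (geometric_poly n :: 'a poly)"
    using power_diff_1_eq[of "[:0, 1:] :: 'a poly" n]
    by (simp only: geometric_poly_def monom_altdef smult_1_left)
  then show ?thesis
    by (metis nonzero_mult_div_cancel_left pCons_eq_0_iff zero_neq_one)
qed

lemma poly_geometric_poly_1: "poly (geometric_poly n) 1 = of_nat n"
  by (simp add: geometric_poly_def poly_sum poly_monom)

lemma trace_eq_lin_assoc_geometric_poly: "trace_qn q n x = lin_assoc q (geometric_poly n) x"
proof -
  have "degree (geometric_poly n :: 'a poly) < Suc n"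
    using degree_le[of n "geometric_poly n :: 'a poly"] by (simp add: coeff_geometric_poly)
  then show ?thesis
    by (simp add: lin_assoc_eq_sum trace_qn_def coeff_geometric_poly)
qed

lemma trace_subfield_q:
  assumes "c \<in> subfield_q q"
  shows "trace_qn q n c = of_nat n * c"
  by (simp add: trace_eq_lin_assoc_geometric_poly lin_assoc_subfield_q[OF assms]
                poly_geometric_poly_1)

context
  fixes q :: nat
  assumes power_q_add: "\<And>x y :: 'a::field. (x + y) ^ q = x ^ q + y ^ q"
begin

lemma zero_power_q [simp]: "(0 :: 'a) ^ q = 0"
  using power_q_add[of 0 0] by (simp only: add_0_right add_cancel_right_right)

lemma power_q_diff: "(x - y) ^ q = x ^ q - (y :: 'a) ^ q"
  using power_q_add[of "x - y" y] by (simp add: algebra_simps)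

lemma power_q_sum: "(\<Sum>i\<in>A. f i) ^ q = (\<Sum>i\<in>A. f i ^ q :: 'a)"
  by (induction A rule: infinite_finite_induct) (simp_all add: power_q_add)

lemma power_q_power_add: "(x + y) ^ (q ^ j) = x ^ (q ^ j) + (y :: 'a) ^ (q ^ j)"
  by (induction j arbitrary: x y) (simp_all add: power_mult power_q_add)

lemma add_in_subfield_q: "a \<in> subfield_q q \<Longrightarrow> b \<in> subfield_q q \<Longrightarrow> (a :: 'a) + b \<in> subfield_q q"
  by (simp add: subfield_q_def power_q_add)

lemma diff_in_subfield_q: "a \<in> subfield_q q \<Longrightarrow> b \<in> subfield_q q \<Longrightarrow> (a :: 'a) - b \<in> subfield_q q"
  by (simp add: subfield_q_def power_q_diff)

lemma of_nat_in_subfield_q: "(of_nat m :: 'a) \<in> subfield_q q"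
  by (induction m) (simp_all add: subfield_q_def power_q_add)

lemma poly_over_1: "poly_over q (1 :: 'a poly)"
  by (simp add: poly_over_def subfield_q_def)

lemma poly_over_add: "poly_over q u \<Longrightarrow> poly_over q v \<Longrightarrow> poly_over q (u + v :: 'a poly)"
  by (simp add: poly_over_def add_in_subfield_q)

lemma poly_over_geometric_poly: "poly_over q (geometric_poly n :: 'a poly)"
  by (simp add: poly_over_def subfield_q_def coeff_geometric_poly)

lemma lin_assoc_add_arg: "lin_assoc q u (x + y) = lin_assoc q u x + lin_assoc q u (y :: 'a)"
  by (simp add: lin_assoc_def power_q_power_add distrib_left sum.distrib)

lemma lin_assoc_zero_arg [simp]: "lin_assoc q u (0 :: 'a) = 0"
  using lin_assoc_add_arg[of u 0 0] by (simp only: add_0_right add_cancel_right_right)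

lemma lin_assoc_diff_arg: "lin_assoc q u (x - y) = lin_assoc q u x - lin_assoc q u (y :: 'a)"
  using lin_assoc_add_arg[of u "x - y" y] by simp

lemma lin_assoc_power_q:
  assumes "poly_over q u"
  shows "lin_assoc q u x ^ q = lin_assoc q u (x ^ q :: 'a)"
proof -
  have "lin_assoc q u x ^ q = (\<Sum>i\<le>degree u. coeff u i ^ q * (x ^ (q ^ i)) ^ q)"
    by (simp add: lin_assoc_def power_q_sum power_mult_distrib)
  also have "\<dots> = lin_assoc q u (x ^ q)"
    using assms by (simp add: lin_assoc_def poly_over_def subfield_q_def flip: power_mult)
      (simp add: mult.commute)
  finally show ?thesis .
qed

lemma lin_assoc_mult:
  assumes "poly_over q v"
  shows "lin_assoc q (u * v) x = lin_assoc q u (lin_assoc q v (x :: 'a))"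
proof (induction u arbitrary: x rule: pCons_induct)
  case (pCons c u)
  have "lin_assoc q (pCons c u * v) x = c * lin_assoc q v x + lin_assoc q (u * v) (x ^ q)"
    by (simp add: lin_assoc_add lin_assoc_smult lin_assoc_pCons)
  also have "lin_assoc q (u * v) (x ^ q) = lin_assoc q u (lin_assoc q v x ^ q)"
    by (simp add: pCons.IH lin_assoc_power_q[OF assms])
  finally show ?case
    by (simp add: lin_assoc_pCons)
qed simp

lemma poly_1_in_subfield_q:
  fixes u :: "'a poly"
  assumes "poly_over q u"
  shows "poly u 1 \<in> subfield_q q"
  using lin_assoc_power_q[OF assms, of 1] lin_assoc_subfield_q[of 1 q u]
  by (simp add: subfield_q_def)

lemma trace_add: "trace_qn q n (x + y) = trace_qn q n x + trace_qn q n (y :: 'a)"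
  by (simp add: trace_eq_lin_assoc_geometric_poly lin_assoc_add_arg)

lemma trace_diff: "trace_qn q n (x - y) = trace_qn q n x - trace_qn q n (y :: 'a)"
  by (simp add: trace_eq_lin_assoc_geometric_poly lin_assoc_diff_arg)

context
  fixes n :: nat
  assumes power_q_n: "\<And>x :: 'a. x ^ (q ^ n) = x"
begin

lemma trace_power_q: "trace_qn q n (x ^ q) = trace_qn q n (x :: 'a)"
proof -
  have "trace_qn q n (x ^ q) = (\<Sum>j<n. x ^ (q ^ Suc j))"
    by (simp add: trace_qn_def mult.commute flip: power_mult)
  also have "\<dots> = (\<Sum>j<n. x ^ (q ^ j))"
    using sum.lessThan_Suc_shift[of "\<lambda>j. x ^ (q ^ j)" n]
      sum.lessThan_Suc[of "\<lambda>j. x ^ (q ^ j)" n]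
    by (simp add: power_q_n)
  finally show ?thesis
    by (simp add: trace_qn_def)
qed

lemma trace_in_subfield_q: "trace_qn q n (x :: 'a) \<in> subfield_q q"
  using lin_assoc_power_q[OF poly_over_geometric_poly, of n x] trace_power_q[of x]
  by (simp add: subfield_q_def flip: trace_eq_lin_assoc_geometric_poly)

lemma trace_lin_assoc:
  assumes "poly_over q h"
  shows "trace_qn q n (lin_assoc q h x) = poly h 1 * trace_qn q n (x :: 'a)"
proof -
  have "trace_qn q n (lin_assoc q h x) = lin_assoc q (geometric_poly n * h) x"
    by (simp add: trace_eq_lin_assoc_geometric_poly lin_assoc_mult[OF assms])
  also have "\<dots> = lin_assoc q h (trace_qn q n x)"
    by (simp add: mult.commute trace_eq_lin_assoc_geometric_poly
                  lin_assoc_mult[OF poly_over_geometric_poly])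
  also have "\<dots> = poly h 1 * trace_qn q n x"
    by (rule lin_assoc_subfield_q[OF trace_in_subfield_q])
  finally show ?thesis .
qed

lemma trace_sum_power_q_minus_self:
  assumes "t \<in> subfield_q q"
  shows "trace_qn q n (\<Sum>i\<in>A. (\<theta> i ^ q - \<theta> i) * t ^ i) = (0 :: 'a)"
proof -
  define g where "g = (\<Sum>i\<in>A. \<theta> i * t ^ i)"
  have "(t ^ i) ^ q = (t ^ q) ^ i" for i
    by (metis power_mult mult.commute)
  then have "(t ^ i) ^ q = t ^ i" for i
    using assms by (simp add: subfield_q_def)
  then have "(\<Sum>i\<in>A. (\<theta> i ^ q - \<theta> i) * t ^ i) = g ^ q - g"
    by (simp add: g_def power_q_sum power_mult_distrib left_diff_distrib sum_subtractf)
  then show ?thesis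
    by (simp add: trace_diff trace_power_q)
qed

lemma inj_lin_assoc_add_comp_trace:
  assumes "poly_over q h"
    and kernel: "\<And>z. lin_assoc q h z = 0 \<Longrightarrow> trace_qn q n z = 0 \<Longrightarrow> z = (0 :: 'a)"
    and inj: "inj_on (\<lambda>t. poly h 1 * t + trace_qn q n (G t)) (subfield_q q)"
  shows "inj (\<lambda>x. lin_assoc q h x + G (trace_qn q n x))"
proof (rule injI)
  fix x y
  assume eq: "lin_assoc q h x + G (trace_qn q n x) = lin_assoc q h y + G (trace_qn q n y)"
  have "trace_qn q n (lin_assoc q h z + G (trace_qn q n z))
      = poly h 1 * trace_qn q n z + trace_qn q n (G (trace_qn q n z))" for z
    by (simp add: trace_add trace_lin_assoc[OF assms(1)])
  then have "trace_qn q n x = trace_qn q n y"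
    using eq inj_onD[OF inj _ trace_in_subfield_q trace_in_subfield_q] by metis
  then have "lin_assoc q h (x - y) = 0" and "trace_qn q n (x - y) = 0"
    using eq by (simp_all add: lin_assoc_diff_arg trace_diff)
  then show "x = y"
    using kernel by fastforce
qed

end

end

lemma lin_assoc_common_root_eq_0:
  fixes u v :: "'a::field_gcd poly"
  assumes power_q_add: "\<And>x y :: 'a. (x + y) ^ q = x ^ q + y ^ q"
    and "poly_over q u" "poly_over q v" "gcd u v = 1"
    and "lin_assoc q u z = 0" "lin_assoc q v z = 0"
  shows "z = 0"
proof -
  obtain a c where "a * u + c * v = 1"
    using bezout_coefficients_fst_snd[of u v] assms(4) by metis
  then have "z = lin_assoc q (a * u + c * v) z"
    by simp
  also have "\<dots> = lin_assoc q a (lin_assoc q u z) + lin_assoc q c (lin_assoc q v z)"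
    by (simp add: lin_assoc_add lin_assoc_mult[OF power_q_add] assms(2,3))
  also have "\<dots> = 0"
    by (simp add: assms(5,6) lin_assoc_zero_arg[OF power_q_add])
  finally show ?thesis .
qed

lemma bij_lin_assoc_add_trace_perm:
  fixes h :: "'a::{field_gcd,finite} poly" and B :: "'a \<Rightarrow> 'a" and \<theta> :: "nat \<Rightarrow> 'a"
  assumes power_q_add: "\<And>x y :: 'a. (x + y) ^ q = x ^ q + y ^ q"
    and power_q_n: "\<And>x :: 'a. x ^ (q ^ n) = x"
    and n_nonzero: "of_nat n \<noteq> (0 :: 'a)"
    and h: "poly_over q h" "gcd h (geometric_poly n) = 1"
    and B: "bij_betw B (subfield_q q) (subfield_q q)"
  shows "bij (\<lambda>x. lin_assoc q h x
           + ((B (trace_qn q n x) - poly h 1 * trace_qn q n x) / of_nat n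
              + (\<Sum>i<q. (\<theta> i ^ q - \<theta> i) * trace_qn q n x ^ i)))"
proof -
  define G where
    "G t = (B t - poly h 1 * t) / of_nat n + (\<Sum>i<q. (\<theta> i ^ q - \<theta> i) * t ^ i)" for t
  have trace_G: "poly h 1 * t + trace_qn q n (G t) = B t" if t: "t \<in> subfield_q q" for t
  proof -
    have "(B t - poly h 1 * t) / of_nat n \<in> subfield_q q"
      using t B poly_1_in_subfield_q[OF power_q_add h(1)]
      by (auto intro!: divide_in_subfield_q diff_in_subfield_q[OF power_q_add] mult_in_subfield_q
                       of_nat_in_subfield_q[OF power_q_add] dest: bij_betwE)
    then show ?thesis
      using n_nonzero
      by (simp add: G_def trace_add[OF power_q_add] trace_subfield_q
                    trace_sum_power_q_minus_self[OF power_q_add power_q_n t])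
  qed
  have "z = 0" if "lin_assoc q h z = 0" "trace_qn q n z = 0" for z
    using lin_assoc_common_root_eq_0[OF power_q_add h(1) poly_over_geometric_poly[OF power_q_add]]
      h(2) that
    by (simp flip: trace_eq_lin_assoc_geometric_poly)
  moreover have "inj_on (\<lambda>t. poly h 1 * t + trace_qn q n (G t)) (subfield_q q)"
    using B trace_G by (simp add: bij_betw_def cong: inj_on_cong)
  ultimately have "inj (\<lambda>x. lin_assoc q h x + G (trace_qn q n x))"
    by (rule inj_lin_assoc_add_comp_trace[OF power_q_add power_q_n h(1)])
  then show ?thesis
    by (simp add: G_def bij_def finite_UNIV_inj_surj)
qed

theorem corollary3p7:
  fixes p q n k :: nat and h b :: "'a::{field_gcd,finite} poly" and \<theta> :: "nat \<Rightarrow> 'a"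
  assumes "prime p" and "k > 0" and "q = p ^ k"
    and "n > 0" and "\<not> p dvd n"
    and "card (UNIV :: 'a set) = q ^ n"
    and "poly_over q h" and "poly_over q b"
    and "gcd h ((monom 1 n - 1) div [:-1, 1:]) = 1"
    and "bij_betw (poly b) (subfield_q q) (subfield_q q)"
  defines "P \<equiv> (\<lambda>x. lin_assoc q h x
        - (poly h 1 / of_nat n) * trace_qn q n x
        + (\<Sum>i\<le>degree b. (coeff b i / of_nat n) * trace_qn q n x ^ i)
        + (\<Sum>i<q. (\<theta> i ^ q - \<theta> i) * trace_qn q n x ^ i))"
  shows "bij P
    \<and> ((gcd (h + 1) ((monom 1 n - 1) div [:-1, 1:]) = 1
         \<and> bij_betw (\<lambda>x. poly b x + x) (subfield_q q) (subfield_q q))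
        \<longrightarrow> bij (\<lambda>x. P x + x))"
proof -
  (* k > 0 and n > 0 follow from the other hypotheses. *)
  have char: "CHAR('a) = p"
    using CHAR_eq_prime_if_card_eq_power assms(1,3,6) by (metis power_mult)
  have power_q_add: "(x + y) ^ q = x ^ q + y ^ q" for x y :: 'a
    using freshmans_dream' assms(1,3) char by metis
  have power_q_n: "x ^ (q ^ n) = x" for x :: 'a
    using power_card_UNIV_eq_self[of x] assms(6) by simp
  have n_nonzero: "of_nat n \<noteq> (0 :: 'a)"
    using assms(5) char by (simp add: of_nat_eq_0_iff_char_dvd)
  note bij_perm = bij_lin_assoc_add_trace_perm[OF power_q_add power_q_n n_nonzero,
      unfolded geometric_poly_eq_div]
  have "P = (\<lambda>x. lin_assoc q h x
              + ((poly b (trace_qn q n x) - poly h 1 * trace_qn q n x) / of_nat n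
                 + (\<Sum>i<q. (\<theta> i ^ q - \<theta> i) * trace_qn q n x ^ i)))"
    by (simp add: P_def fun_eq_iff poly_altdef[of b] sum_divide_distrib diff_divide_distrib)
  then have "bij P"
    using bij_perm[OF assms(7,9,10)] by simp
  moreover have "bij (\<lambda>x. P x + x)"
    if "gcd (h + 1) ((monom 1 n - 1) div [:-1, 1:]) = 1"
      and "bij_betw (\<lambda>x. poly b x + x) (subfield_q q) (subfield_q q)"
  proof -
    have "(\<lambda>x. P x + x) = (\<lambda>x. lin_assoc q (h + 1) x
            + ((poly b (trace_qn q n x) + trace_qn q n x - poly (h + 1) 1 * trace_qn q n x)
                 / of_nat n
               + (\<Sum>i<q. (\<theta> i ^ q - \<theta> i) * trace_qn q n x ^ i)))"
      by (simp add: P_def fun_eq_iff poly_altdef[of b] lin_assoc_add sum_divide_distrib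
                    diff_divide_distrib algebra_simps)
    then show ?thesis
      using bij_perm[OF poly_over_add[OF power_q_add assms(7) poly_over_1[OF power_q_add]] that] by simp
  qed
  ultimately show ?thesis
    by auto
qed

end
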